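(* Let $A$ be an $m$-dimensional binary array of size $n_1\times\cdots\times n_m$ and $\mathbb{A}$ its periodic extension to $\mathbb{Z}^m$. If some toroidal vector $\langle h_1,\dots,h_m\rangle$ occurs at least twice in $\mathcal{T}_A$ and $h_i\neq n_i/2$ for every $i\in[m]$ (i.e. it is not in $\mathcal{H}_A$), then there is an $n_1\times\cdots\times n_m$ window of $\mathbb{A}$ having a repeated difference vector (i.e. two distinct ordered pairs of distinct dots in the window with the same difference vector).
   Context: For $n\in\mathbb{N}$, $[n]=\{1,\dots,n\}$. An $m$-dimensional binary array of size $n_1\times\cdots\times n_m$ ($m\ge2$, all $n_i\ge 2$) is a function $A:\Lambda\to\{0,1\}$ with $\Lambda=[n_1]\times\cdots\times[n_m]$; a dot is a point where $A$ equals 1. The periodic extension $\mathbb{A}:\mathbb{Z}^m\to\{0,1\}$ is $\mathbb{A}(a_1,\dots,a_m)=A(a_1',\dots,a_m')$ where $a_i'\in[n_i]$, $a_i'\equiv a_i\pmod{n_i}$. An $n_1\times\cdots\times n_m$ window of $\mathbb{A}$ is the restriction of $\mathbb{A}$ to a box $\prod_i\{k_i,\dots,k_i+n_i-1\}$, $k_i\in\mathbb{Z}$. The difference vector from a dot $\alpha=(a_1,\dots,a_m)$ to a distinct dot $\omega=(w_1,\dots,w_m)$ is $\langle w_1-a_1,\dots,w_m-a_m\rangle\in\mathbb{Z}^m$; the toroidal vector is $\langle (w_1-a_1)\bmod n_1,\dots,(w_m-a_m)\bmod n_m\rangle\in\mathbb{Z}_{n_1}\times\cdots\times\mathbb{Z}_{n_m}$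 (components taken in $\{0,\dots,n_i-1\}$). $\mathcal{T}_A$ is the multiset of toroidal vectors over all ordered pairs of distinct dots of $A$, and $\mathcal{H}_A$ is the sub-multiset of those $\langle h_1,\dots,h_m\rangle$ with $h_i=n_i/2$ for some $i\in[m]$. *)

theory Defs
  imports Main "HOL-Library.Multiset"
begin

type_synonym point = "nat \<Rightarrow> int"

text \<open>Points of Z^m are functions nat => int that vanish outside the index set [m] = {1..m}.\<close>
definition Zpts :: "nat \<Rightarrow> point set" where
  "Zpts m = {a. \<forall>i. i \<notin> {1..m} \<longrightarrow> a i = 0}"

definition Lam :: "nat \<Rightarrow> (nat \<Rightarrow> nat) \<Rightarrow> point set" where
  "Lam m n = {a \<in> Zpts m. \<forall>i\<in>{1..m}. 1 \<le> a i \<and> a i \<le> int (n i)}"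

text \<open>A binary array is a function A : Lambda -> {0,1}; we represent it by a predicate
  (True = 1), only its values on Lambda being relevant.\<close>
definition reduce :: "nat \<Rightarrow> (nat \<Rightarrow> nat) \<Rightarrow> point \<Rightarrow> point" where
  "reduce m n a = (\<lambda>i. if i \<in> {1..m} then (a i - 1) mod int (n i) + 1 else 0)"

definition perext :: "nat \<Rightarrow> (nat \<Rightarrow> nat) \<Rightarrow> (point \<Rightarrow> bool) \<Rightarrow> point \<Rightarrow> bool" where
  "perext m n A a = A (reduce m n a)"

definition dots :: "nat \<Rightarrow> (nat \<Rightarrow> nat) \<Rightarrow> (point \<Rightarrow> bool) \<Rightarrow> point set" where
  "dots m n A = {a \<in> Lam m n. A a}"

definition torvec :: "nat \<Rightarrow> (nat \<Rightarrow> nat) \<Rightarrow> point \<Rightarrow> point \<Rightarrow> point" where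
  "torvec m n \<alpha> \<omega> = (\<lambda>i. if i \<in> {1..m} then (\<omega> i - \<alpha> i) mod int (n i) else 0)"

definition diffvec :: "nat \<Rightarrow> point \<Rightarrow> point \<Rightarrow> point" where
  "diffvec m \<alpha> \<omega> = (\<lambda>i. if i \<in> {1..m} then \<omega> i - \<alpha> i else 0)"

definition TA :: "nat \<Rightarrow> (nat \<Rightarrow> nat) \<Rightarrow> (point \<Rightarrow> bool) \<Rightarrow> point multiset" where
  "TA m n A = image_mset (\<lambda>(\<alpha>, \<omega>). torvec m n \<alpha> \<omega>)
      (mset_set {(\<alpha>, \<omega>). \<alpha> \<in> dots m n A \<and> \<omega> \<in> dots m n A \<and> \<alpha> \<noteq> \<omega>})"

definition window :: "nat \<Rightarrow> (nat \<Rightarrow> nat) \<Rightarrow> point \<Rightarrow> point set" where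
  "window m n k = {a \<in> Zpts m. \<forall>i\<in>{1..m}. k i \<le> a i \<and> a i \<le> k i + int (n i) - 1}"

definition window_dots :: "nat \<Rightarrow> (nat \<Rightarrow> nat) \<Rightarrow> (point \<Rightarrow> bool) \<Rightarrow> point \<Rightarrow> point set" where
  "window_dots m n A k = {a \<in> window m n k. perext m n A a}"

definition has_repeated_diffvec :: "nat \<Rightarrow> point set \<Rightarrow> bool" where
  "has_repeated_diffvec m D \<longleftrightarrow>
     (\<exists>\<alpha> \<omega> \<alpha>' \<omega>'. \<alpha> \<in> D \<and> \<omega> \<in> D \<and> \<alpha>' \<in> D \<and> \<omega>' \<in> D \<and>
        \<alpha> \<noteq> \<omega> \<and> \<alpha>' \<noteq> \<omega>' \<and> (\<alpha>, \<omega>) \<noteq> (\<alpha>', \<omega>') \<and>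
        diffvec m \<alpha> \<omega> = diffvec m \<alpha>' \<omega>')"

end

theory Submission
  imports Defs
begin

text \<open>The window of the periodic extension with lower corner k contains exactly one copy
  k + (b - k) mod n of every point b of the array. The difference vector between the copies of
  two dots agrees with their toroidal vector, except that it loses n_i in each coordinate where
  the pair wraps around the window. Given two pairs of dots with the same toroidal vector h,
  it therefore suffices to choose each k_i so that either both pairs wrap in coordinate i or
  neither does; shifting k_i moves the start of the first pair freely over the residues mod n_i,
  and a suitable position exists precisely because h_i \<noteq> n_i/2. The argument needs only
  n_i > 0, and it works in every dimension m.\<close>

lemma exists_shift_same_wrap:
  fixes h t n :: int
  assumes "0 \<le> h" "h < n" "0 \<le> t" "t < n" "2 * h \<noteq> n"
  shows "\<exists>s\<in>{0..<n}. (s + h < n) = ((s + t) mod n + h < n)"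
proof (cases "2 * h < n")
  case True
  show ?thesis
  proof (cases "t + h < n")
    case True
    then show ?thesis using assms by (intro bexI[of _ 0]) auto
  next
    case False
    then have "(n - t + t) mod n = 0" by simp
    then show ?thesis using False \<open>2 * h < n\<close> assms by (intro bexI[of _ "n - t"]) auto
  qed
next
  case False
  show ?thesis
  proof (cases "t < h")
    case True
    then have "(n - h + t) mod n = n - h + t" using assms by (intro mod_pos_pos_trivial) auto
    then show ?thesis using True assms by (intro bexI[of _ "n - h"]) auto
  next
    case False
    have "(2 * n - h - t + t) mod n = (n - h + n) mod n" by (rule arg_cong[of _ _ "\<lambda>x. x mod n"]) simp
    also have "\<dots> = n - h"
      using assms \<open>\<not> 2 * h < n\<close> by (simp only: mod_add_self2) (intro mod_pos_pos_trivial; simp)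
    finally have "(2 * n - h - t + t) mod n = n - h" .
    then show ?thesis using False \<open>\<not> 2 * h < n\<close> assms by (intro bexI[of _ "2 * n - h - t"]) auto
  qed
qed

lemma mod_offset_diff:
  fixes x y k n :: int
  assumes "n > 0"
  shows "(y - k) mod n - (x - k) mod n =
    (if (x - k) mod n + (y - x) mod n < n then (y - x) mod n else (y - x) mod n - n)"
proof -
  have "(y - k) mod n = ((x - k) mod n + (y - x) mod n) mod n"
    by (metis diff_add_cancel add.commute add_diff_eq mod_add_eq)
  moreover have "s mod n = s - n" if "n \<le> s" "s < 2 * n" for s
    using that mod_pos_pos_trivial[of "s - n" n] by (simp add: mod_diff_right_eq[symmetric])
  ultimately show ?thesis
    using assms by (smt (verit) mod_pos_pos_trivial pos_mod_bound pos_mod_sign)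
qed

lemma exists_offset_same_mod_diff:
  fixes a w a' w' n :: int
  assumes "n > 0" "(w - a) mod n = (w' - a') mod n" "2 * ((w - a) mod n) \<noteq> n"
  shows "\<exists>k. (w - k) mod n - (a - k) mod n = (w' - k) mod n - (a' - k) mod n"
proof -
  define h where "h = (w - a) mod n"
  obtain s where s: "0 \<le> s" "s < n" "(s + h < n) = ((s + (a' - a) mod n) mod n + h < n)"
    using exists_shift_same_wrap[of h n "(a' - a) mod n"] assms by (auto simp: h_def)
  define k where "k = a - s"
  have "(a - k) mod n = s"
    using s by (simp add: k_def)
  moreover have "(a' - k) mod n = (s + (a' - a) mod n) mod n"
    unfolding k_def by (metis add.commute diff_diff_eq2 diff_add_eq mod_add_right_eq)
  ultimately have same_wrap: "((a - k) mod n + h < n) = ((a' - k) mod n + h < n)"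
    using s by simp
  have "(w - k) mod n - (a - k) mod n = (if (a - k) mod n + h < n then h else h - n)"
    unfolding h_def by (rule mod_offset_diff[OF assms(1)])
  moreover have "(w' - k) mod n - (a' - k) mod n = (if (a' - k) mod n + h < n then h else h - n)"
    unfolding h_def assms(2) by (rule mod_offset_diff[OF assms(1)])
  ultimately have "(w - k) mod n - (a - k) mod n = (w' - k) mod n - (a' - k) mod n"
    using same_wrap by presburger
  then show ?thesis ..
qed

lemma count_image_mset_mset_set_ge_2D:
  assumes "count (image_mset f (mset_set S)) x \<ge> 2"
  obtains p q where "p \<in> S" "q \<in> S" "p \<noteq> q" "f p = x" "f q = x"
proof -
  have "finite S"
    using assms by (cases "finite S") auto
  then have "Suc (Suc 0) \<le> card {p \<in> S. f p = x}"
    using assms by (simp add: count_image_mset Int_def conj_commute)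
  then obtain p q B where "{p \<in> S. f p = x} = insert p (insert q B)" "p \<notin> insert q B"
    by (auto simp: card_le_Suc_iff)
  then show ?thesis
    using that by (metis (mono_tags, lifting) insertCI mem_Collect_eq)
qed

definition window_copy :: "nat \<Rightarrow> (nat \<Rightarrow> nat) \<Rightarrow> point \<Rightarrow> point \<Rightarrow> point" where
  "window_copy m n k b = (\<lambda>i. if i \<in> {1..m} then k i + (b i - k i) mod int (n i) else 0)"

lemma reduce_window_copy:
  assumes "b \<in> Lam m n"
  shows "reduce m n (window_copy m n k b) = b"
proof
  fix i
  show "reduce m n (window_copy m n k b) i = b i"
  proof (cases "i \<in> {1..m}")
    case True
    then have "1 \<le> b i" "b i \<le> int (n i)"
      using assms by (auto simp: Lam_def)
    have "(k i + (b i - k i) mod int (n i) - 1) mod int (n i) =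
        ((b i - k i) mod int (n i) + (k i - 1)) mod int (n i)"
      by (simp add: algebra_simps)
    also have "\<dots> = (b i - 1) mod int (n i)"
      by (simp add: mod_add_left_eq)
    also have "\<dots> = b i - 1"
      using \<open>1 \<le> b i\<close> \<open>b i \<le> int (n i)\<close> by (intro mod_pos_pos_trivial) auto
    finally show ?thesis
      using True by (simp add: reduce_def window_copy_def)
  next
    case False
    then show ?thesis
      using assms by (auto simp: reduce_def window_copy_def Lam_def Zpts_def)
  qed
qed

lemma inj_on_window_copy: "inj_on (window_copy m n k) (Lam m n)"
  by (rule inj_on_inverseI[of _ "reduce m n"]) (rule reduce_window_copy)

lemma window_copy_mem_window_dots:
  assumes "\<forall>i\<in>{1..m}. n i > 0" "b \<in> dots m n A"
  shows "window_copy m n k b \<in> window_dots m n A k"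
proof -
  have "window_copy m n k b \<in> window m n k"
    using assms(1) by (auto simp: window_def Zpts_def window_copy_def)
  moreover have "perext m n A (window_copy m n k b)"
    using assms(2) by (simp add: perext_def dots_def reduce_window_copy)
  ultimately show ?thesis
    by (simp add: window_dots_def)
qed

lemma diffvec_window_copy:
  "diffvec m (window_copy m n k a) (window_copy m n k w) =
    (\<lambda>i. if i \<in> {1..m} then (w i - k i) mod int (n i) - (a i - k i) mod int (n i) else 0)"
  by (auto simp: diffvec_def window_copy_def)

lemma exists_window_same_diffvec:
  assumes "\<forall>i\<in>{1..m}. n i > 0" "torvec m n a w = h" "torvec m n a' w' = h"
    and "\<forall>i\<in>{1..m}. 2 * h i \<noteq> int (n i)"
  shows "\<exists>k\<in>Zpts m. diffvec m (window_copy m n k a) (window_copy m n k w) =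
    diffvec m (window_copy m n k a') (window_copy m n k w')"
proof -
  have "\<forall>i\<in>{1..m}. \<exists>c. (w i - c) mod int (n i) - (a i - c) mod int (n i) =
      (w' i - c) mod int (n i) - (a' i - c) mod int (n i)"
  proof
    fix i assume i: "i \<in> {1..m}"
    have h: "(w i - a i) mod int (n i) = h i" "(w' i - a' i) mod int (n i) = h i"
      using i fun_cong[OF assms(2), of i] fun_cong[OF assms(3), of i] by (simp_all add: torvec_def)
    show "\<exists>c. (w i - c) mod int (n i) - (a i - c) mod int (n i) =
        (w' i - c) mod int (n i) - (a' i - c) mod int (n i)"
    proof (rule exists_offset_same_mod_diff)
      show "int (n i) > 0" "(w i - a i) mod int (n i) = (w' i - a' i) mod int (n i)"
        "2 * ((w i - a i) mod int (n i)) \<noteq> int (n i)"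
        using i assms(1,4) h by auto
    qed
  qed
  then have "\<exists>c. \<forall>i\<in>{1..m}. (w i - c i) mod int (n i) - (a i - c i) mod int (n i) =
      (w' i - c i) mod int (n i) - (a' i - c i) mod int (n i)"
    by (rule bchoice)
  then obtain c where c: "\<forall>i\<in>{1..m}. (w i - c i) mod int (n i) - (a i - c i) mod int (n i) =
      (w' i - c i) mod int (n i) - (a' i - c i) mod int (n i)" ..
  define k :: point where "k i = (if i \<in> {1..m} then c i else 0)" for i
  have "k \<in> Zpts m"
    by (simp add: k_def Zpts_def)
  moreover have "diffvec m (window_copy m n k a) (window_copy m n k w) =
      diffvec m (window_copy m n k a') (window_copy m n k w')"
    using c by (auto simp: diffvec_window_copy k_def)
  ultimately show ?thesis
    by (intro bexI[of _ k])
qed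

theorem mainTheorem2:
  fixes m :: nat and n :: "nat \<Rightarrow> nat" and A :: "point \<Rightarrow> bool" and h :: point
  assumes "m \<ge> 2"
    and "\<forall>i\<in>{1..m}. n i \<ge> 2"
    and "count (TA m n A) h \<ge> 2"
    and "\<forall>i\<in>{1..m}. 2 * h i \<noteq> int (n i)"
  shows "\<exists>k \<in> Zpts m. has_repeated_diffvec m (window_dots m n A k)"
proof -
  obtain a w a' w' where dots: "a \<in> dots m n A" "w \<in> dots m n A" "a' \<in> dots m n A" "w' \<in> dots m n A"
    and distinct: "a \<noteq> w" "a' \<noteq> w'" "(a, w) \<noteq> (a', w')"
    and torvec: "torvec m n a w = h" "torvec m n a' w' = h"
    using assms(3) unfolding TA_def by (elim count_image_mset_mset_set_ge_2D) auto
  have n_pos: "\<forall>i\<in>{1..m}. n i > 0"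
    using assms(2) by fastforce
  obtain k where "k \<in> Zpts m" and same_diffvec:
    "diffvec m (window_copy m n k a) (window_copy m n k w) =
     diffvec m (window_copy m n k a') (window_copy m n k w')"
    using exists_window_same_diffvec[OF n_pos torvec assms(4)] by blast
  let ?c = "window_copy m n k"
  have "inj_on ?c (dots m n A)"
    by (rule inj_on_subset[OF inj_on_window_copy]) (auto simp: dots_def)
  then have "?c a \<noteq> ?c w" "?c a' \<noteq> ?c w'" "(?c a, ?c w) \<noteq> (?c a', ?c w')"
    using dots distinct by (simp_all add: inj_on_eq_iff)
  moreover have "?c b \<in> window_dots m n A k" if "b \<in> dots m n A" for b
    using window_copy_mem_window_dots[OF n_pos that] .
  ultimately have "has_repeated_diffvec m (window_dots m n A k)"
    unfolding has_repeated_diffvec_def using dots same_diffvec by blast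
  with \<open>k \<in> Zpts m\<close> show ?thesis by blast
qed

end
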